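(* Let $S=\{1,\dots,k\}$ with $k\ge3$ and $c\in\mathbb{R}_+$. Both $\rho_c$ and $\overline\rho_c$ are t-monotone submodular functions on $2^{S^\pm}$, and $B_c=\mathcal{B}(\rho_c)$, $\overline B_c=\mathcal{B}(\overline\rho_c)$.
   Context: $S^\pm=S\times\{\pm1\}$, $i^\pm=(i,\pm1)$, $S^\pm\supseteq S^+=\{i^+\}$, $S^-=\{i^-\}$. For $X\subseteq S^\pm$ write $X^+=X\cap S^+$, $X^-=X\cap S^-$, and let $\underline X$ be obtained from $X$ by removing every pair $\{i^+,i^-\}\subseteq X$. A function $\rho$ on $2^{S^\pm}$ with $\rho(\emptyset)=0$ is submodular if $\rho(X)+\rho(Y)\ge\rho(X\cap Y)+\rho(X\cup Y)$, t-monotone if $\rho(\underline X)\le\rho(X)$ for all $X$; $\mathcal{B}(\rho)=\{x\in\mathbb{R}^{S^\pm}:x(S^\pm)=\rho(S^\pm),\ x(X)\le\rho(X)\ \forall X\}$. Types: for $u,v\in\{0,1,2\}$, $X$ is of type $uv$ if $|X^+|=u$ when $u\in\{0,1\}$ and $|X^+|\ge2$ when $u=2$, and $|X^-|=k-v$ when $v\in\{0,1\}$ and $|X^-|\le k-2$ when $v=2$. $X$ is of type $11^*$ if $X^+=\{i^+\}$ and $X^-=S^-\setminus\{i^-\}$ for some $i\in S$; "type 11" means type 11 but not type $11^*$. Define $\rho_c(X)=2c$ if $X$ is of type 22, $\rho_c(X)=c$ if $X$ is of type 11, 12 or 21, and $\rho_c(X)=0$ otherwise; and $\overline\rho_c(X)=c\,(\min\{|X^+|,2\}+\min\{k-2-|X^-|,0\})$.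 $B_c$ is the set of $x\in\mathbb{R}^{S^\pm}$ with $x(S^\pm)=0$, $x(S^+)\le 2c$, $x(i^+)+x(S^-\setminus\{i^-\})\le0$ ($i\in S$), $0\le x(i^+)\le c$ and $-c\le x(i^-)\le0$ ($i\in S$); $\overline B_c$ consists of $x\in B_c$ with additionally $x(S^-)\le-2c$. *)

theory Defs
  imports Complex_Main
begin

text \<open>Elements of S^pm are pairs (i, b) with i in S = {1..k}; b = True encodes i^+,
  b = False encodes i^-.\<close>

definition Spm :: "nat \<Rightarrow> (nat \<times> bool) set" where
  "Spm k = {1..k} \<times> UNIV"

definition Sp :: "nat \<Rightarrow> (nat \<times> bool) set" where
  "Sp k = {1..k} \<times> {True}"

definition Sm :: "nat \<Rightarrow> (nat \<times> bool) set" where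
  "Sm k = {1..k} \<times> {False}"

definition posp :: "(nat \<times> bool) set \<Rightarrow> (nat \<times> bool) set" where
  "posp X = {p \<in> X. snd p}"

definition negp :: "(nat \<times> bool) set \<Rightarrow> (nat \<times> bool) set" where
  "negp X = {p \<in> X. \<not> snd p}"

definition tred :: "(nat \<times> bool) set \<Rightarrow> (nat \<times> bool) set" where
  "tred X = {p \<in> X. (fst p, \<not> snd p) \<notin> X}"

definition submodular_on :: "nat \<Rightarrow> ((nat \<times> bool) set \<Rightarrow> real) \<Rightarrow> bool" where
  "submodular_on k \<rho> \<longleftrightarrow> \<rho> {} = 0 \<and>
     (\<forall>X Y. X \<subseteq> Spm k \<longrightarrow> Y \<subseteq> Spm k \<longrightarrow> \<rho> X + \<rho> Y \<ge> \<rho> (X \<inter> Y) + \<rho> (X \<union> Y))"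

definition tmonotone_on :: "nat \<Rightarrow> ((nat \<times> bool) set \<Rightarrow> real) \<Rightarrow> bool" where
  "tmonotone_on k \<rho> \<longleftrightarrow> (\<forall>X. X \<subseteq> Spm k \<longrightarrow> \<rho> (tred X) \<le> \<rho> X)"

text \<open>Vectors in R^{S^pm}: real functions vanishing outside S^pm.\<close>
definition Bpoly :: "nat \<Rightarrow> ((nat \<times> bool) set \<Rightarrow> real) \<Rightarrow> ((nat \<times> bool) \<Rightarrow> real) set" where
  "Bpoly k \<rho> = {x. (\<forall>p. p \<notin> Spm k \<longrightarrow> x p = 0) \<and> sum x (Spm k) = \<rho> (Spm k) \<and>
                    (\<forall>X. X \<subseteq> Spm k \<longrightarrow> sum x X \<le> \<rho> X)}"

definition has_type :: "nat \<Rightarrow> nat \<Rightarrow> nat \<Rightarrow> (nat \<times> bool) set \<Rightarrow> bool" where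
  "has_type k u v X \<longleftrightarrow>
     (if u \<le> 1 then card (posp X) = u else card (posp X) \<ge> 2) \<and>
     (if v \<le> 1 then card (negp X) = k - v else card (negp X) \<le> k - 2)"

definition type11star :: "nat \<Rightarrow> (nat \<times> bool) set \<Rightarrow> bool" where
  "type11star k X \<longleftrightarrow> (\<exists>i\<in>{1..k}. posp X = {(i, True)} \<and> negp X = Sm k - {(i, False)})"

definition rho_c :: "nat \<Rightarrow> real \<Rightarrow> (nat \<times> bool) set \<Rightarrow> real" where
  "rho_c k c X =
     (if has_type k 2 2 X then 2 * c
      else if (has_type k 1 1 X \<and> \<not> type11star k X) \<or> has_type k 1 2 X \<or> has_type k 2 1 X then c
      else 0)"

definition rhobar_c :: "nat \<Rightarrow> real \<Rightarrow> (nat \<times> bool) set \<Rightarrow> real" where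
  "rhobar_c k c X = c * (min (real (card (posp X))) 2 + min (real k - 2 - real (card (negp X))) 0)"

definition B_c :: "nat \<Rightarrow> real \<Rightarrow> ((nat \<times> bool) \<Rightarrow> real) set" where
  "B_c k c = {x. (\<forall>p. p \<notin> Spm k \<longrightarrow> x p = 0) \<and> sum x (Spm k) = 0 \<and> sum x (Sp k) \<le> 2 * c \<and>
               (\<forall>i\<in>{1..k}. x (i, True) + sum x (Sm k - {(i, False)}) \<le> 0) \<and>
               (\<forall>i\<in>{1..k}. 0 \<le> x (i, True) \<and> x (i, True) \<le> c) \<and>
               (\<forall>i\<in>{1..k}. - c \<le> x (i, False) \<and> x (i, False) \<le> 0)}"

definition Bbar_c :: "nat \<Rightarrow> real \<Rightarrow> ((nat \<times> bool) \<Rightarrow> real) set" where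
  "Bbar_c k c = {x \<in> B_c k c. sum x (Sm k) \<le> - 2 * c}"

end

theory Submission
  imports Defs
begin

text \<open>
  Write p = |X^+| and q = k - |X^-|. Then rho_c X = c * min p (min q 2), except that rho_c
  vanishes on the sets of type 11*, and rhobar_c X = c * (min p 2 + min (q - 2) 0). Both p
  and q are modular, p increasing and q decreasing, so these capped minima are submodular
  by elementary arithmetic. A set X of type 11* needs a separate argument: rho_c / c is at
  most 1 on all subsets and supersets of X, and the value 1 at X \<inter> Y or at X \<union> Y
  forces enough of Y to give rho_c Y the required value. For t-monotonicity, removing the
  complementary pairs lowers |X^+| and |X^-| by the same amount, and every positive element
  i^+ that survives matches the missing negative element i^-, so |(tred X)^+| \<le> q.

  For the polytopes, the inequalities defining B_c are the constraints of B(rho_c) for the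
  test sets S^+, {i^+} \<union> (S^- - {i^-}), {i^+}, {i^-}, S^\<plusminus> - {i^+} and S^\<plusminus> - {i^-};
  conversely, every constraint x(X) \<le> rho(X) follows from separate bounds on x(X^+) and x(X^-).
\<close>

lemma finite_Spm: "finite (Spm k)"
  by (simp add: Spm_def)

lemma Spm_eq_Sp_Un_Sm: "Spm k = Sp k \<union> Sm k" and Sp_Sm_disjoint: "Sp k \<inter> Sm k = {}"
  by (auto simp: Spm_def Sp_def Sm_def)

lemma finite_Sp: "finite (Sp k)" and finite_Sm: "finite (Sm k)"
  by (simp_all add: Sp_def Sm_def)

lemma card_Sp: "card (Sp k) = k"
  by (simp add: Sp_def card_cartesian_product)

lemma card_Sm: "card (Sm k) = k"
  by (simp add: Sm_def card_cartesian_product)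

lemma card_Sm_remove: "i \<in> {1..k} \<Longrightarrow> card (Sm k - {(i, False)}) = k - 1"
  by (simp add: card_Sm finite_Sm Sm_def)

lemma Sp_subset_Spm: "Sp k \<subseteq> Spm k" and Sm_subset_Spm: "Sm k \<subseteq> Spm k"
  by (auto simp: Spm_def Sp_def Sm_def)

lemma posp_subset_Sp: "X \<subseteq> Spm k \<Longrightarrow> posp X \<subseteq> Sp k"
  by (auto simp: posp_def Spm_def Sp_def)

lemma negp_subset_Sm: "X \<subseteq> Spm k \<Longrightarrow> negp X \<subseteq> Sm k"
  by (auto simp: negp_def Spm_def Sm_def)

lemma card_negp_le: "X \<subseteq> Spm k \<Longrightarrow> card (negp X) \<le> k"
  by (metis card_Sm card_mono finite_Sm negp_subset_Sm)

lemma card_negp_less: "X \<subseteq> Spm k \<Longrightarrow> p \<in> Sm k \<Longrightarrow> p \<notin> X \<Longrightarrow> card (negp X) < k"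
  by (metis card_Sm finite_Sm negp_def negp_subset_Sm psubsetI psubset_card_mono mem_Collect_eq)

lemma finite_posp: "finite X \<Longrightarrow> finite (posp X)"
  and finite_negp: "finite X \<Longrightarrow> finite (negp X)"
  by (simp_all add: posp_def negp_def)

lemma posp_Int: "posp (X \<inter> Y) = posp X \<inter> posp Y" and posp_Un: "posp (X \<union> Y) = posp X \<union> posp Y"
  and negp_Int: "negp (X \<inter> Y) = negp X \<inter> negp Y" and negp_Un: "negp (X \<union> Y) = negp X \<union> negp Y"
  by (auto simp: posp_def negp_def)

lemma posp_mono: "X \<subseteq> Y \<Longrightarrow> posp X \<subseteq> posp Y" and negp_mono: "X \<subseteq> Y \<Longrightarrow> negp X \<subseteq> negp Y"
  by (auto simp: posp_def negp_def)

lemma negp_subset: "negp X \<subseteq> X"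
  by (auto simp: negp_def)

lemma posp_Un_negp: "posp X \<union> negp X = X" and posp_Int_negp: "posp X \<inter> negp X = {}"
  by (auto simp: posp_def negp_def)

lemma sum_posp_negp: "finite X \<Longrightarrow> sum x X = sum x (posp X) + sum x (negp X)"
  by (metis finite_negp finite_posp posp_Un_negp posp_Int_negp sum.union_disjoint)

lemma card_posp_Int_Un:
  assumes "finite X" "finite Y"
  shows "card (posp (X \<inter> Y)) + card (posp (X \<union> Y)) = card (posp X) + card (posp Y)"
  using card_Un_Int[OF finite_posp finite_posp, OF assms] by (simp add: posp_Int posp_Un)

lemma card_negp_Int_Un:
  assumes "finite X" "finite Y"
  shows "card (negp (X \<inter> Y)) + card (negp (X \<union> Y)) = card (negp X) + card (negp Y)"
  using card_Un_Int[OF finite_negp finite_negp, OF assms] by (simp add: negp_Int negp_Un)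

lemma type11star_card:
  assumes "type11star k X" shows "card (posp X) = 1" "card (negp X) = k - 1"
  using assms card_Sm_remove by (auto simp: type11star_def)

lemma type11star_tred: assumes "type11star k X" shows "tred X = X"
proof -
  obtain i where pX: "posp X = {(i, True)}" and nX: "negp X = Sm k - {(i, False)}"
    using assms by (auto simp: type11star_def)
  have "(j, True) \<in> X \<longleftrightarrow> (j, True) \<in> posp X" "(j, False) \<in> X \<longleftrightarrow> (j, False) \<in> negp X" for j
    by (simp_all add: posp_def negp_def)
  then have in_X: "(j, True) \<in> X \<longleftrightarrow> j = i" "(i, False) \<notin> X" for j
    using pX nX by simp_all
  have "(fst p, \<not> snd p) \<notin> X" if "p \<in> X" for p
  proof (cases p)
    case (Pair j b)
    then show ?thesis using that in_X by (cases b) auto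
  qed
  then show ?thesis
    unfolding tred_def by blast
qed

lemma card_posp_tred_add:
  assumes "finite X"
  shows "card (posp (tred X)) + card (negp X) = card (negp (tred X)) + card (posp X)"
proof -
  have "posp X - posp (tred X) = apsnd Not ` (negp X - negp (tred X))"
    by (force simp: posp_def negp_def tred_def image_iff)
  then have "card (posp X - posp (tred X)) = card (negp X - negp (tred X))"
    by (simp add: card_image inj_on_def prod_eq_iff)
  moreover have "posp (tred X) \<subseteq> posp X" "negp (tred X) \<subseteq> negp X"
    by (auto simp: posp_def negp_def tred_def)
  ultimately have "card (posp X) - card (posp (tred X)) = card (negp X) - card (negp (tred X))"
    using assms by (simp add: card_Diff_subset finite_subset finite_posp finite_negp)
  moreover have "card (posp (tred X)) \<le> card (posp X)" "card (negp (tred X)) \<le> card (negp X)"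
    using \<open>posp (tred X) \<subseteq> posp X\<close> \<open>negp (tred X) \<subseteq> negp X\<close> assms
    by (simp_all add: card_mono finite_posp finite_negp)
  ultimately show ?thesis
    by linarith
qed

lemma tred_subset: "tred X \<subseteq> X"
  by (auto simp: tred_def)

lemma card_posp_tred_le: "finite X \<Longrightarrow> card (posp (tred X)) \<le> card (posp X)"
  by (simp add: card_mono finite_posp posp_mono tred_subset)

lemma card_posp_tred_negp_le:
  assumes "X \<subseteq> Spm k"
  shows "card (posp (tred X)) + card (negp X) \<le> k"
proof -
  have "apsnd Not ` posp (tred X) \<subseteq> Sm k - negp X"
    using assms by (auto simp: tred_def posp_def negp_def Sm_def Spm_def)
  then have "card (apsnd Not ` posp (tred X)) \<le> card (Sm k - negp X)"
    by (simp add: card_mono finite_Sm)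
  moreover have "card (apsnd Not ` posp (tred X)) = card (posp (tred X))"
    by (simp add: card_image inj_on_def prod_eq_iff)
  moreover have "card (Sm k - negp X) = k - card (negp X)"
    using negp_subset_Sm[OF assms] by (simp add: card_Diff_subset finite_subset finite_Sm card_Sm)
  ultimately show ?thesis
    using card_negp_le[OF assms] by linarith
qed

lemma capped_min_submodular:
  fixes a b x y m :: "'a :: linordered_cancel_ab_semigroup_add"
  assumes "a + b = x + y" "a \<le> x" "a \<le> y"
  shows "min a m + min b m \<le> min x m + min y m"
  using assms unfolding min_def
  by (smt (verit) add_le_cancel_left add_mono le_cases add.commute order_trans)

lemma capped_min2_submodular:
  fixes pI pU pX pY qI qU qX qY m :: "'a :: linordered_cancel_ab_semigroup_add"
  assumes "pI + pU = pX + pY" "pI \<le> pX" "pI \<le> pY"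
    and "qI + qU = qX + qY" "qU \<le> qX" "qU \<le> qY"
  shows "min pI (min qI m) + min pU (min qU m) \<le> min pX (min qX m) + min pY (min qY m)"
  using assms unfolding min_def
  by (smt (verit) add_le_cancel_left add_le_cancel_right add_mono le_cases add.commute order_trans)

definition rho_unit :: "nat \<Rightarrow> (nat \<times> bool) set \<Rightarrow> nat" where
  "rho_unit k X =
     (if type11star k X then 0 else min (card (posp X)) (min (k - card (negp X)) 2))"

lemma rho_c_eq_rho_unit:
  assumes "2 \<le> k" "X \<subseteq> Spm k"
  shows "rho_c k c X = c * real (rho_unit k X)"
proof -
  define p q where "p = card (posp X)" and "q = k - card (negp X)"
  have "card (negp X) \<le> k"
    using card_negp_le[OF assms(2)] .
  then have types: "has_type k 2 2 X \<longleftrightarrow> 2 \<le> p \<and> 2 \<le> q" "has_type k 1 1 X \<longleftrightarrow> p = 1 \<and> q = 1"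
    "has_type k 1 2 X \<longleftrightarrow> p = 1 \<and> 2 \<le> q" "has_type k 2 1 X \<longleftrightarrow> 2 \<le> p \<and> q = 1"
    using assms(1) unfolding has_type_def p_def q_def by auto
  have star: "type11star k X \<Longrightarrow> p = 1 \<and> q = 1"
    using type11star_card[of k X] assms(1) unfolding p_def q_def by auto
  have "p = 0 \<or> p = 1 \<or> 2 \<le> p" "q = 0 \<or> q = 1 \<or> 2 \<le> q"
    by linarith+
  then show ?thesis
    using star unfolding rho_c_def rho_unit_def types p_def[symmetric] q_def[symmetric]
    by (elim disjE) (auto simp: min_def)
qed

lemma rho_unit_le: "rho_unit k X \<le> min (card (posp X)) (min (k - card (negp X)) 2)"
  by (simp add: rho_unit_def min_def)

lemma rho_unit_pos_iff:
  "0 < rho_unit k X \<longleftrightarrow> \<not> type11star k X \<and> 0 < card (posp X) \<and> card (negp X) < k"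
  by (auto simp: rho_unit_def)

lemma rho_unit_eq_2:
  "2 \<le> card (posp X) \<Longrightarrow> card (negp X) + 2 \<le> k \<Longrightarrow> rho_unit k X = 2"
  using type11star_card(1)[of k X] by (auto simp: rho_unit_def)

lemma rho_unit_empty: "rho_unit k {} = 0"
  by (simp add: rho_unit_def posp_def)

lemma rho_unit_subset_type11star:
  assumes i: "i \<in> {1..k}" and pX: "posp X = {(i, True)}" and nX: "negp X = Sm k - {(i, False)}"
    and "Z \<subseteq> X"
  shows "rho_unit k Z \<le> 1" and "rho_unit k Z = 1 \<Longrightarrow> (i, True) \<in> Z \<and> \<not> negp X \<subseteq> Z"
proof -
  have pZ: "posp Z \<subseteq> {(i, True)}"
    using posp_mono[OF \<open>Z \<subseteq> X\<close>] pX by simp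
  then have "card (posp Z) \<le> 1"
    using card_mono[of "{(i, True)}" "posp Z"] by simp
  then show "rho_unit k Z \<le> 1"
    using rho_unit_le[of k Z] by linarith
  assume "rho_unit k Z = 1"
  then have "\<not> type11star k Z" and "card (posp Z) \<noteq> 0"
    using rho_unit_pos_iff[of k Z] by simp_all
  then have "posp Z = {(i, True)}"
    using pZ by (metis card.empty subset_singletonD)
  then have "(i, True) \<in> Z"
    by (auto simp: posp_def)
  moreover have "\<not> negp X \<subseteq> Z"
  proof
    assume "negp X \<subseteq> Z"
    then have "negp Z = negp X"
      using negp_mono[OF \<open>Z \<subseteq> X\<close>] by (auto simp: negp_def)
    then show False
      using \<open>\<not> type11star k Z\<close> \<open>posp Z = {(i, True)}\<close> i nX unfolding type11star_def by blast
  qed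
  ultimately show "(i, True) \<in> Z \<and> \<not> negp X \<subseteq> Z" ..
qed

lemma rho_unit_superset_type11star:
  assumes i: "i \<in> {1..k}" and pX: "posp X = {(i, True)}" and nX: "negp X = Sm k - {(i, False)}"
    and "X \<subseteq> W" and W: "W \<subseteq> Spm k"
  shows "rho_unit k W \<le> 1" and "rho_unit k W = 1 \<Longrightarrow> (i, False) \<notin> W \<and> \<not> posp W \<subseteq> {(i, True)}"
proof -
  have nW: "Sm k - {(i, False)} \<subseteq> negp W"
    using negp_mono[OF \<open>X \<subseteq> W\<close>] nX by simp
  then have "k - 1 \<le> card (negp W)"
    using card_mono[OF finite_negp, OF finite_subset[OF W finite_Spm] nW] card_Sm_remove[OF i]
    by simp
  then show "rho_unit k W \<le> 1"
    using rho_unit_le[of k W] by linarith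
  assume "rho_unit k W = 1"
  then have "\<not> type11star k W" and "card (negp W) \<noteq> k"
    using rho_unit_pos_iff[of k W] by simp_all
  have "(i, False) \<notin> W"
  proof
    assume "(i, False) \<in> W"
    then have "negp W = Sm k"
      using nW negp_subset_Sm[OF W] by (auto simp: negp_def)
    then show False
      using \<open>card (negp W) \<noteq> k\<close> card_Sm by simp
  qed
  then have "negp W = Sm k - {(i, False)}"
    using nW negp_subset_Sm[OF W] by (auto simp: negp_def)
  then have "posp W \<noteq> {(i, True)}"
    using \<open>\<not> type11star k W\<close> i unfolding type11star_def by blast
  then have "\<not> posp W \<subseteq> {(i, True)}"
    using posp_mono[OF \<open>X \<subseteq> W\<close>] pX by auto
  with \<open>(i, False) \<notin> W\<close> show "(i, False) \<notin> W \<and> \<not> posp W \<subseteq> {(i, True)}" ..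
qed

lemma two_le_card:
  assumes "finite A" "a \<in> A" "\<not> A \<subseteq> {a}"
  shows "2 \<le> card A"
proof -
  obtain b where "b \<in> A" "b \<noteq> a"
    using assms(3) by blast
  then have "card {a, b} \<le> card A"
    using assms(1,2) by (intro card_mono) auto
  with \<open>b \<noteq> a\<close> show ?thesis
    by simp
qed

lemma rho_unit_pos_of_mem_True:
  assumes Y: "Y \<subseteq> Spm k" and "(i, True) \<in> Y" and "\<not> Sm k - {(i, False)} \<subseteq> Y"
  shows "0 < rho_unit k Y"
proof -
  have "\<not> type11star k Y"
  proof
    assume "type11star k Y"
    then obtain j where pY: "posp Y = {(j, True)}" and nY: "negp Y = Sm k - {(j, False)}"
      unfolding type11star_def by blast
    have "(i, True) \<in> posp Y"
      using assms(2) by (simp add: posp_def)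
    then have "negp Y = Sm k - {(i, False)}"
      using pY nY by simp
    then show False
      using assms(3) negp_subset[of Y] by simp
  qed
  moreover obtain p where "p \<in> Sm k" "p \<notin> Y"
    using assms(3) by blast
  moreover have "(i, True) \<in> posp Y" "finite (posp Y)"
    using assms(2) finite_posp finite_subset[OF Y finite_Spm] by (auto simp: posp_def)
  ultimately show ?thesis
    unfolding rho_unit_pos_iff using card_negp_less[OF Y] by (auto simp: card_gt_0_iff)
qed

lemma rho_unit_pos_of_not_mem_False:
  assumes Y: "Y \<subseteq> Spm k" and i: "i \<in> {1..k}"
    and "(i, False) \<notin> Y" and "\<not> posp Y \<subseteq> {(i, True)}"
  shows "0 < rho_unit k Y"
proof -
  have iF: "(i, False) \<in> Sm k"
    using i by (simp add: Sm_def)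
  have "\<not> type11star k Y"
  proof
    assume "type11star k Y"
    then obtain j where "posp Y = {(j, True)}" "negp Y = Sm k - {(j, False)}"
      unfolding type11star_def by blast
    with assms(3,4) iF show False
      by (auto simp: negp_def)
  qed
  moreover have "posp Y \<noteq> {}" "finite (posp Y)"
    using assms(4) finite_posp finite_subset[OF Y finite_Spm] by auto
  ultimately show ?thesis
    unfolding rho_unit_pos_iff using card_negp_less[OF Y iF assms(3)] by (auto simp: card_gt_0_iff)
qed

lemma rho_unit_submodular_type11star:
  assumes "type11star k X" and X: "X \<subseteq> Spm k" and Y: "Y \<subseteq> Spm k"
  shows "rho_unit k (X \<inter> Y) + rho_unit k (X \<union> Y) \<le> rho_unit k Y"
proof -
  obtain i where i: "i \<in> {1..k}" and pX: "posp X = {(i, True)}" and nX: "negp X = Sm k - {(i, False)}"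
    using assms(1) by (auto simp: type11star_def)
  have XY: "X \<union> Y \<subseteq> Spm k"
    using X Y by blast
  note Int_bound = rho_unit_subset_type11star[OF i pX nX Int_lower1[of X Y]]
  note Un_bound = rho_unit_superset_type11star[OF i pX nX Un_upper1[of X Y] XY]
  have Int_one: "(i, True) \<in> Y" "\<not> Sm k - {(i, False)} \<subseteq> Y" if "rho_unit k (X \<inter> Y) = 1"
    using Int_bound(2)[OF that] negp_subset[of X] unfolding nX by blast+
  have Un_one: "(i, False) \<notin> Y" "\<not> posp Y \<subseteq> {(i, True)}" if "rho_unit k (X \<union> Y) = 1"
    using Un_bound(2)[OF that] pX by (auto simp: posp_Un)
  have "rho_unit k Y = 2" if Int1: "rho_unit k (X \<inter> Y) = 1" and Un1: "rho_unit k (X \<union> Y) = 1"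
  proof (rule rho_unit_eq_2)
    have "(i, True) \<in> posp Y" "finite (posp Y)"
      using Int_one(1)[OF Int1] finite_posp finite_subset[OF Y finite_Spm] by (auto simp: posp_def)
    then show "2 \<le> card (posp Y)"
      using two_le_card[of "posp Y" "(i, True)"] Un_one(2)[OF Un1] by simp
    have "negp Y \<subset> negp X"
      using negp_subset_Sm[OF Y] Un_one(1)[OF Un1] Int_one(2)[OF Int1] nX
      by (auto simp: negp_def)
    then have "card (negp Y) < card (negp X)"
      using psubset_card_mono[OF finite_negp[OF finite_subset[OF X finite_Spm]]] by blast
    then show "card (negp Y) + 2 \<le> k"
      using nX card_Sm_remove[OF i] by simp
  qed
  moreover have "0 < rho_unit k Y" if "rho_unit k (X \<inter> Y) = 1"
    using rho_unit_pos_of_mem_True[OF Y Int_one[OF that]] .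
  moreover have "0 < rho_unit k Y" if "rho_unit k (X \<union> Y) = 1"
    using rho_unit_pos_of_not_mem_False[OF Y i Un_one[OF that]] .
  ultimately show ?thesis
    using Int_bound(1) Un_bound(1)
    by (cases "rho_unit k (X \<inter> Y) = 1"; cases "rho_unit k (X \<union> Y) = 1") auto
qed

lemma rho_unit_submodular:
  assumes X: "X \<subseteq> Spm k" and Y: "Y \<subseteq> Spm k"
  shows "rho_unit k (X \<inter> Y) + rho_unit k (X \<union> Y) \<le> rho_unit k X + rho_unit k Y"
proof (cases "type11star k X \<or> type11star k Y")
  case True
  then show ?thesis
    using rho_unit_submodular_type11star[OF _ X Y] rho_unit_submodular_type11star[OF _ Y X]
    by (auto simp: Int_commute Un_commute)
next
  case False
  have fX: "finite X" and fY: "finite Y"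
    using X Y finite_subset finite_Spm by blast+
  have "card (posp (X \<inter> Y)) \<le> card (posp X)" "card (posp (X \<inter> Y)) \<le> card (posp Y)"
    "card (negp (X \<inter> Y)) \<le> card (negp X)" "card (negp (X \<inter> Y)) \<le> card (negp Y)"
    using fX fY by (simp_all add: card_mono finite_posp finite_negp posp_mono negp_mono)
  moreover have "card (negp (X \<union> Y)) \<le> k"
    using X Y by (intro card_negp_le) blast
  ultimately have "min (card (posp (X \<inter> Y))) (min (k - card (negp (X \<inter> Y))) 2)
      + min (card (posp (X \<union> Y))) (min (k - card (negp (X \<union> Y))) 2)
    \<le> min (card (posp X)) (min (k - card (negp X)) 2) + min (card (posp Y)) (min (k - card (negp Y)) 2)"
    using card_posp_Int_Un[OF fX fY] card_negp_Int_Un[OF fX fY]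
    by (intro capped_min2_submodular) linarith+
  moreover have "rho_unit k X = min (card (posp X)) (min (k - card (negp X)) 2)"
    "rho_unit k Y = min (card (posp Y)) (min (k - card (negp Y)) 2)"
    using False by (simp_all add: rho_unit_def)
  ultimately show ?thesis
    using rho_unit_le[of k "X \<inter> Y"] rho_unit_le[of k "X \<union> Y"] by linarith
qed

lemma rho_unit_tred_le:
  assumes "X \<subseteq> Spm k"
  shows "rho_unit k (tred X) \<le> rho_unit k X"
proof (cases "type11star k X")
  case True
  then show ?thesis
    by (simp add: type11star_tred)
next
  case False
  have "card (posp (tred X)) \<le> card (posp X)"
    using card_posp_tred_le[OF finite_subset[OF assms finite_Spm]] .
  with card_posp_tred_negp_le[OF assms] have
    "min (card (posp (tred X))) 2 \<le> min (card (posp X)) (min (k - card (negp X)) 2)"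
    by linarith
  moreover have "rho_unit k X = min (card (posp X)) (min (k - card (negp X)) 2)"
    using False by (simp add: rho_unit_def)
  ultimately show ?thesis
    using rho_unit_le[of k "tred X"] by linarith
qed

lemma rhobar_c_scaled: "rhobar_c k c X = c * rhobar_c k 1 X"
  by (simp add: rhobar_c_def)

lemma rhobar_submodular:
  assumes X: "X \<subseteq> Spm k" and Y: "Y \<subseteq> Spm k"
  shows "rhobar_c k 1 (X \<inter> Y) + rhobar_c k 1 (X \<union> Y) \<le> rhobar_c k 1 X + rhobar_c k 1 Y"
proof -
  have fX: "finite X" and fY: "finite Y"
    using X Y finite_subset finite_Spm by blast+
  have "card (posp (X \<inter> Y)) \<le> card (posp X)" "card (posp (X \<inter> Y)) \<le> card (posp Y)"
    "card (negp (X \<inter> Y)) \<le> card (negp X)" "card (negp (X \<inter> Y)) \<le> card (negp Y)"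
    using fX fY by (simp_all add: card_mono finite_posp finite_negp posp_mono negp_mono)
  moreover have
    "real (card (posp (X \<inter> Y))) + real (card (posp (X \<union> Y))) = real (card (posp X)) + real (card (posp Y))"
    "real (card (negp (X \<inter> Y))) + real (card (negp (X \<union> Y))) = real (card (negp X)) + real (card (negp Y))"
    using card_posp_Int_Un[OF fX fY] card_negp_Int_Un[OF fX fY] by (metis of_nat_add)+
  ultimately have "min (real (card (posp (X \<inter> Y)))) 2 + min (real (card (posp (X \<union> Y)))) 2
      \<le> min (real (card (posp X))) 2 + min (real (card (posp Y))) 2"
    and "min (real k - 2 - real (card (negp (X \<union> Y)))) 0 + min (real k - 2 - real (card (negp (X \<inter> Y)))) 0
      \<le> min (real k - 2 - real (card (negp X))) 0 + min (real k - 2 - real (card (negp Y))) 0"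
    by (intro capped_min_submodular; simp; linarith)+
  then show ?thesis
    by (simp add: rhobar_c_def)
qed

lemma rhobar_tred_le:
  assumes "X \<subseteq> Spm k"
  shows "rhobar_c k 1 (tred X) \<le> rhobar_c k 1 X"
proof -
  have fX: "finite X"
    using assms finite_subset finite_Spm by blast
  have "real (card (posp (tred X))) + real (card (negp X)) = real (card (negp (tred X))) + real (card (posp X))"
    using card_posp_tred_add[OF fX] by (metis of_nat_add)
  moreover have "real (card (posp (tred X))) + real (card (negp X)) \<le> real k"
    using card_posp_tred_negp_le[OF assms] by linarith
  moreover have "real (card (posp (tred X))) \<le> real (card (posp X))"
    using card_posp_tred_le[OF fX] by simp
  ultimately show ?thesis
    unfolding rhobar_c_def min_def by (smt (verit) of_nat_0_le_iff)
qed

lemma submodular_on_scaled: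
  assumes "submodular_on k \<rho>" "0 \<le> c" "\<And>X. X \<subseteq> Spm k \<Longrightarrow> \<rho>' X = c * \<rho> X"
  shows "submodular_on k \<rho>'"
  unfolding submodular_on_def
proof (intro conjI allI impI)
  show "\<rho>' {} = 0"
    using assms(1) assms(3)[of "{}"] by (simp add: submodular_on_def)
  fix X Y assume "X \<subseteq> Spm k" "Y \<subseteq> Spm k"
  then have "c * (\<rho> (X \<inter> Y) + \<rho> (X \<union> Y)) \<le> c * (\<rho> X + \<rho> Y)"
    using assms(1,2) by (simp add: submodular_on_def mult_left_mono)
  then show "\<rho>' (X \<inter> Y) + \<rho>' (X \<union> Y) \<le> \<rho>' X + \<rho>' Y"
    using assms(3) \<open>X \<subseteq> Spm k\<close> \<open>Y \<subseteq> Spm k\<close> by (simp add: distrib_left le_supI le_infI1)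
qed

lemma tmonotone_on_scaled:
  assumes "tmonotone_on k \<rho>" "0 \<le> c" "\<And>X. X \<subseteq> Spm k \<Longrightarrow> \<rho>' X = c * \<rho> X"
  shows "tmonotone_on k \<rho>'"
  unfolding tmonotone_on_def
proof (intro allI impI)
  fix X assume X: "X \<subseteq> Spm k"
  then have "c * \<rho> (tred X) \<le> c * \<rho> X"
    using assms(1,2) by (simp add: tmonotone_on_def mult_left_mono)
  then show "\<rho>' (tred X) \<le> \<rho>' X"
    using assms(3) X tred_subset[of X] by simp
qed

lemma submodular_on_rho_unit: "submodular_on k (\<lambda>X. real (rho_unit k X))"
  unfolding submodular_on_def
  using rho_unit_empty rho_unit_submodular by (metis of_nat_0 of_nat_add of_nat_le_iff)

lemma tmonotone_on_rho_unit: "tmonotone_on k (\<lambda>X. real (rho_unit k X))"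
  unfolding tmonotone_on_def using rho_unit_tred_le by simp

lemma submodular_on_rhobar: "2 \<le> k \<Longrightarrow> submodular_on k (rhobar_c k 1)"
  unfolding submodular_on_def using rhobar_submodular by (simp add: rhobar_c_def posp_def negp_def)

lemma tmonotone_on_rhobar: "tmonotone_on k (rhobar_c k 1)"
  unfolding tmonotone_on_def using rhobar_tred_le by simp

lemma Bpoly_subset_B_c:
  assumes "\<rho> (Spm k) = 0" "\<rho> (Sp k) \<le> 2 * c"
    and "\<And>i. i \<in> {1..k} \<Longrightarrow> \<rho> (insert (i, True) (Sm k - {(i, False)})) \<le> 0"
    and "\<And>i. i \<in> {1..k} \<Longrightarrow> \<rho> {(i, True)} \<le> c"
    and "\<And>i. i \<in> {1..k} \<Longrightarrow> \<rho> (Spm k - {(i, True)}) \<le> 0"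
    and "\<And>i. i \<in> {1..k} \<Longrightarrow> \<rho> {(i, False)} \<le> 0"
    and "\<And>i. i \<in> {1..k} \<Longrightarrow> \<rho> (Spm k - {(i, False)}) \<le> c"
  shows "Bpoly k \<rho> \<subseteq> B_c k c"
proof
  fix x assume "x \<in> Bpoly k \<rho>"
  then have zero: "\<forall>p. p \<notin> Spm k \<longrightarrow> x p = 0" and total: "sum x (Spm k) = 0"
    and le: "\<And>X. X \<subseteq> Spm k \<Longrightarrow> sum x X \<le> \<rho> X"
    using assms(1) by (auto simp: Bpoly_def)
  have "x (i, True) + sum x (Sm k - {(i, False)}) \<le> 0 \<and> 0 \<le> x (i, True) \<and> x (i, True) \<le> c
      \<and> - c \<le> x (i, False) \<and> x (i, False) \<le> 0" if i: "i \<in> {1..k}" for i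
  proof -
    have mem: "(i, True) \<in> Spm k" "(i, False) \<in> Spm k" "(i, True) \<notin> Sm k"
      using i by (auto simp: Spm_def Sm_def)
    have "x (i, True) + sum x (Sm k - {(i, False)}) = sum x (insert (i, True) (Sm k - {(i, False)}))"
      using mem by (simp add: finite_Sm)
    moreover have "sum x (Spm k - {p}) = - x p" if "p \<in> Spm k" for p
      using that total by (simp add: sum_diff1[OF finite_Spm])
    moreover have "insert (i, True) (Sm k - {(i, False)}) \<subseteq> Spm k"
      using mem Sm_subset_Spm by blast
    ultimately show ?thesis
      using le[of "insert (i, True) (Sm k - {(i, False)})"] le[of "{(i, True)}"] le[of "{(i, False)}"]
        le[of "Spm k - {(i, True)}"] le[of "Spm k - {(i, False)}"] assms(3-7)[OF i] mem
      by fastforce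
  qed
  moreover have "sum x (Sp k) \<le> 2 * c"
    using le[OF Sp_subset_Spm] assms(2) by simp
  ultimately show "x \<in> B_c k c"
    using zero total by (simp add: B_c_def)
qed

lemma B_c_sum_posp_le:
  assumes x: "x \<in> B_c k c" and X: "X \<subseteq> Spm k"
  shows "sum x (posp X) \<le> c * real (card (posp X))" and "sum x (posp X) \<le> sum x (Sp k)"
proof -
  have bounds: "0 \<le> x p \<and> x p \<le> c" if "p \<in> Sp k" for p
    using x that by (auto simp: B_c_def Sp_def)
  show "sum x (posp X) \<le> c * real (card (posp X))"
    using sum_bounded_above[of "posp X" x c] bounds posp_subset_Sp[OF X] by (auto simp: mult.commute)
  show "sum x (posp X) \<le> sum x (Sp k)"
    using bounds posp_subset_Sp[OF X] by (intro sum_mono2[OF finite_Sp]) auto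
qed

lemma B_c_sum_negp_le:
  assumes x: "x \<in> B_c k c" and X: "X \<subseteq> Spm k"
  shows "sum x (negp X) \<le> 0"
    and "sum x (negp X) \<le> sum x (Sm k) + c * (real k - real (card (negp X)))"
proof -
  have bounds: "- c \<le> x p \<and> x p \<le> 0" if "p \<in> Sm k" for p
    using x that by (auto simp: B_c_def Sm_def)
  show "sum x (negp X) \<le> 0"
    using bounds negp_subset_Sm[OF X] by (intro sum_nonpos) auto
  have "sum x (negp X) = sum x (Sm k) - sum x (Sm k - negp X)"
    using sum_diff[OF finite_Sm negp_subset_Sm[OF X], of x] by simp
  moreover have "sum (\<lambda>p. - x p) (Sm k - negp X) \<le> real (card (Sm k - negp X)) * c"
  proof (rule sum_bounded_above)
    fix p assume "p \<in> Sm k - negp X"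
    then show "- x p \<le> c"
      using bounds[of p] by simp
  qed
  moreover have "card (Sm k - negp X) = k - card (negp X)"
    using negp_subset_Sm[OF X] by (simp add: card_Diff_subset finite_subset finite_Sm card_Sm)
  ultimately show "sum x (negp X) \<le> sum x (Sm k) + c * (real k - real (card (negp X)))"
    using card_negp_le[OF X] by (simp add: sum_negf of_nat_diff mult.commute)
qed

lemma B_c_sum_le_rho_unit:
  assumes x: "x \<in> B_c k c" and X: "X \<subseteq> Spm k" and "0 \<le> c"
  shows "sum x X \<le> c * real (rho_unit k X)"
proof (cases "type11star k X")
  case True
  then obtain i where i: "i \<in> {1..k}" and "X = insert (i, True) (Sm k - {(i, False)})"
    unfolding type11star_def by (metis posp_Un_negp insert_is_Un)
  moreover have "(i, True) \<notin> Sm k"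
    by (simp add: Sm_def)
  ultimately have "sum x X = x (i, True) + sum x (Sm k - {(i, False)})"
    by (simp add: finite_Sm)
  also have "\<dots> \<le> 0"
    using x i by (simp add: B_c_def)
  finally show ?thesis
    by (simp add: rho_unit_def True)
next
  case False
  have fX: "finite X"
    using X finite_subset finite_Spm by blast
  have "sum x (Sp k) + sum x (Sm k) = 0" "sum x (Sp k) \<le> 2 * c"
    using x sum.union_disjoint[OF finite_Sp finite_Sm Sp_Sm_disjoint, of x]
    by (simp_all add: B_c_def Spm_eq_Sp_Un_Sm)
  then have "sum x X \<le> c * real (card (posp X))" "sum x X \<le> c * 2"
    "sum x X \<le> c * real (k - card (negp X))"
    using B_c_sum_posp_le[OF x X] B_c_sum_negp_le[OF x X] sum_posp_negp[OF fX, of x] card_negp_le[OF X]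
    by (simp_all add: of_nat_diff)
  then show ?thesis
    using \<open>0 \<le> c\<close> False by (simp add: rho_unit_def min_def)
qed

lemma Bbar_c_sum_le_rhobar:
  assumes x: "x \<in> Bbar_c k c" and X: "X \<subseteq> Spm k"
  shows "sum x X \<le> rhobar_c k c X"
proof -
  have xB: "x \<in> B_c k c" and Sm: "sum x (Sm k) \<le> - 2 * c"
    using x by (simp_all add: Bbar_c_def)
  have "sum x (Sp k) \<le> 2 * c"
    using xB by (simp add: B_c_def)
  then have "sum x (posp X) \<le> c * min (real (card (posp X))) 2"
    using B_c_sum_posp_le[OF xB X] by (simp add: min_def)
  moreover have "sum x (negp X) \<le> c * min (real k - 2 - real (card (negp X))) 0"
    using B_c_sum_negp_le[OF xB X] Sm by (simp add: min_def algebra_simps)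
  ultimately show ?thesis
    using sum_posp_negp[OF finite_subset[OF X finite_Spm], of x] by (simp add: rhobar_c_def distrib_left)
qed

lemma posp_negp_Spm_Sp_Sm:
  "posp (Spm k) = Sp k" "negp (Spm k) = Sm k" "posp (Sp k) = Sp k" "negp (Sp k) = {}"
  "posp (Sm k) = {}" "negp (Sm k) = Sm k"
  by (auto simp: posp_def negp_def Spm_def Sp_def Sm_def)

lemma posp_negp_singleton:
  "posp {(i, True)} = {(i, True)}" "negp {(i, True)} = {}"
  "posp {(i, False)} = {}" "negp {(i, False)} = {(i, False)}"
  by (auto simp: posp_def negp_def)

lemma posp_negp_remove:
  assumes "i \<in> {1..k}"
  shows "posp (insert (i, True) (Sm k - {(i, False)})) = {(i, True)}"
    "negp (insert (i, True) (Sm k - {(i, False)})) = Sm k - {(i, False)}"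
    "posp (Spm k - {(i, True)}) = Sp k - {(i, True)}" "negp (Spm k - {(i, True)}) = Sm k"
    "posp (Spm k - {(i, False)}) = Sp k" "negp (Spm k - {(i, False)}) = Sm k - {(i, False)}"
  using assms by (auto simp: posp_def negp_def Spm_def Sp_def Sm_def)

lemma card_Sp_remove: "i \<in> {1..k} \<Longrightarrow> card (Sp k - {(i, True)}) = k - 1"
  by (simp add: card_Sp finite_Sp Sp_def)

lemma rho_c_Spm: "2 \<le> k \<Longrightarrow> rho_c k c (Spm k) = 0"
  using rho_c_eq_rho_unit[of k "Spm k" c] rho_unit_le[of k "Spm k"]
  by (simp add: posp_negp_Spm_Sp_Sm card_Sm)

lemma rho_c_Sp_le: "2 \<le> k \<Longrightarrow> 0 \<le> c \<Longrightarrow> rho_c k c (Sp k) \<le> 2 * c"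
  using rho_c_eq_rho_unit[OF _ Sp_subset_Spm, of k c] rho_unit_le[of k "Sp k"]
    mult_left_mono[of "real (rho_unit k (Sp k))" 2 c]
  by simp

lemma rho_c_test_sets:
  assumes k: "2 \<le> k" and c: "0 \<le> c" and i: "i \<in> {1..k}"
  shows "rho_c k c (insert (i, True) (Sm k - {(i, False)})) \<le> 0"
    and "rho_c k c {(i, True)} \<le> c" and "rho_c k c (Spm k - {(i, True)}) \<le> 0"
    and "rho_c k c {(i, False)} \<le> 0" and "rho_c k c (Spm k - {(i, False)}) \<le> c"
proof -
  have rho: "rho_c k c X = c * real (rho_unit k X)" if "X \<subseteq> Spm k" for X
    using rho_c_eq_rho_unit[OF k that] .
  have le1: "rho_c k c X \<le> c" if "X \<subseteq> Spm k" "rho_unit k X \<le> 1" for X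
    using rho[OF that(1)] that(2) c mult_left_mono[of "real (rho_unit k X)" 1 c] by simp
  have sub: "insert (i, True) (Sm k - {(i, False)}) \<subseteq> Spm k" "{(i, True)} \<subseteq> Spm k"
    "{(i, False)} \<subseteq> Spm k" "Spm k - {(i, True)} \<subseteq> Spm k" "Spm k - {(i, False)} \<subseteq> Spm k"
    using i Sm_subset_Spm by (auto simp: Spm_def)
  have "type11star k (insert (i, True) (Sm k - {(i, False)}))"
    using i posp_negp_remove[OF i] unfolding type11star_def by blast
  then show "rho_c k c (insert (i, True) (Sm k - {(i, False)})) \<le> 0"
    using rho[OF sub(1)] by (simp add: rho_unit_def)
  show "rho_c k c {(i, True)} \<le> c"
    using le1[OF sub(2)] rho_unit_le[of k "{(i, True)}"] by (simp add: posp_negp_singleton)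
  show "rho_c k c {(i, False)} \<le> 0"
    using rho[OF sub(3)] rho_unit_le[of k "{(i, False)}"] by (simp add: posp_negp_singleton)
  show "rho_c k c (Spm k - {(i, True)}) \<le> 0"
    using rho[OF sub(4)] rho_unit_le[of k "Spm k - {(i, True)}"]
    by (simp add: posp_negp_remove[OF i] card_Sm)
  show "rho_c k c (Spm k - {(i, False)}) \<le> c"
    using le1[OF sub(5)] rho_unit_le[of k "Spm k - {(i, False)}"] i
    by (simp add: posp_negp_remove[OF i] card_Sm_remove)
qed

lemma rhobar_c_Spm_Sp_Sm:
  assumes "2 \<le> k"
  shows "rhobar_c k c (Spm k) = 0" "rhobar_c k c (Sp k) = 2 * c" "rhobar_c k c (Sm k) = - 2 * c"
  using assms by (simp_all add: rhobar_c_def posp_negp_Spm_Sp_Sm card_Sp card_Sm)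

lemma rhobar_c_test_sets:
  assumes k: "3 \<le> k" and i: "i \<in> {1..k}"
  shows "rhobar_c k c (insert (i, True) (Sm k - {(i, False)})) = 0"
    and "rhobar_c k c {(i, True)} = c" and "rhobar_c k c (Spm k - {(i, True)}) = 0"
    and "rhobar_c k c {(i, False)} = 0" and "rhobar_c k c (Spm k - {(i, False)}) = c"
proof -
  have "real (k - 1) = real k - 1"
    using k by (simp add: of_nat_diff)
  then show "rhobar_c k c (insert (i, True) (Sm k - {(i, False)})) = 0"
    "rhobar_c k c {(i, True)} = c" "rhobar_c k c (Spm k - {(i, True)}) = 0"
    "rhobar_c k c {(i, False)} = 0" "rhobar_c k c (Spm k - {(i, False)}) = c"
    using k i
    by (simp_all add: rhobar_c_def posp_negp_remove posp_negp_singleton card_Sm card_Sp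
        card_Sm_remove card_Sp_remove min_def)
qed

lemma B_c_eq_Bpoly_rho_c:
  assumes k: "2 \<le> k" and c: "0 \<le> c"
  shows "B_c k c = Bpoly k (rho_c k c)"
proof
  show "B_c k c \<subseteq> Bpoly k (rho_c k c)"
  proof
    fix x assume x: "x \<in> B_c k c"
    then show "x \<in> Bpoly k (rho_c k c)"
      using B_c_sum_le_rho_unit[OF x _ c] rho_c_eq_rho_unit[OF k] rho_c_Spm[OF k]
      by (simp add: Bpoly_def B_c_def)
  qed
  show "Bpoly k (rho_c k c) \<subseteq> B_c k c"
    by (rule Bpoly_subset_B_c) (use rho_c_Spm[OF k] rho_c_Sp_le[OF k c] rho_c_test_sets[OF k c] in auto)
qed

lemma Bbar_c_eq_Bpoly_rhobar_c:
  assumes k: "3 \<le> k"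
  shows "Bbar_c k c = Bpoly k (rhobar_c k c)"
proof
  have k2: "2 \<le> k"
    using k by simp
  show "Bbar_c k c \<subseteq> Bpoly k (rhobar_c k c)"
  proof
    fix x assume x: "x \<in> Bbar_c k c"
    then show "x \<in> Bpoly k (rhobar_c k c)"
      using Bbar_c_sum_le_rhobar[OF x] rhobar_c_Spm_Sp_Sm(1)[OF k2]
      by (simp add: Bpoly_def Bbar_c_def B_c_def)
  qed
  have "Bpoly k (rhobar_c k c) \<subseteq> B_c k c"
    by (rule Bpoly_subset_B_c) (use rhobar_c_Spm_Sp_Sm[OF k2] rhobar_c_test_sets[OF k] in auto)
  moreover have "sum x (Sm k) \<le> - 2 * c" if "x \<in> Bpoly k (rhobar_c k c)" for x
  proof -
    have "sum x (Sm k) \<le> rhobar_c k c (Sm k)"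
      using that Sm_subset_Spm by (simp add: Bpoly_def)
    then show ?thesis
      using rhobar_c_Spm_Sp_Sm(3)[OF k2] by simp
  qed
  ultimately show "Bpoly k (rhobar_c k c) \<subseteq> Bbar_c k c"
    by (auto simp: Bbar_c_def)
qed

theorem lemma4p2:
  fixes k :: nat and c :: real
  assumes "k \<ge> 3" and "c \<ge> 0"
  shows "submodular_on k (rho_c k c) \<and> tmonotone_on k (rho_c k c) \<and>
         submodular_on k (rhobar_c k c) \<and> tmonotone_on k (rhobar_c k c) \<and>
         B_c k c = Bpoly k (rho_c k c) \<and> Bbar_c k c = Bpoly k (rhobar_c k c)"
proof -
  have k: "2 \<le> k"
    using assms(1) by simp
  note rho = rho_c_eq_rho_unit[OF k] and rhobar = rhobar_c_scaled[of k c]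
  show ?thesis
  proof (intro conjI)
    show "submodular_on k (rho_c k c)"
      using submodular_on_scaled[OF submodular_on_rho_unit assms(2) rho] .
    show "tmonotone_on k (rho_c k c)"
      using tmonotone_on_scaled[OF tmonotone_on_rho_unit assms(2) rho] .
    show "submodular_on k (rhobar_c k c)"
      using submodular_on_scaled[OF submodular_on_rhobar[OF k] assms(2) rhobar] .
    show "tmonotone_on k (rhobar_c k c)"
      using tmonotone_on_scaled[OF tmonotone_on_rhobar assms(2) rhobar] .
    show "B_c k c = Bpoly k (rho_c k c)"
      using B_c_eq_Bpoly_rho_c[OF k assms(2)] .
    show "Bbar_c k c = Bpoly k (rhobar_c k c)"
      using Bbar_c_eq_Bpoly_rhobar_c[OF assms(1)] .
  qed
qed

end
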